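(* Let $A$ be a complete MV-algebra (its natural-order lattice is complete) and let $\{d_i\}_{i\in\Omega}$ be any family of $(\odot,\vee)$-derivations on $A$. Then (1) the map $\bigvee_{i\in\Omega}d_i$, defined by $(\bigvee_i d_i)(x)=\bigvee_i d_i(x)$, is a $(\odot,\vee)$-derivation on $A$; and (2) $\operatorname{Der}(A)$, ordered pointwise, is a complete lattice with bottom $\mathbf{0}_A$ and top $\mathrm{Id}_A$.
   Context: An MV-algebra is an algebra $(A,\oplus,{}^*,0)$ of type $(2,1,0)$ satisfying: $x\oplus(y\oplus z)=(x\oplus y)\oplus z$, $x\oplus y=y\oplus x$, $x\oplus 0=x$, $x^{**}=x$, $x\oplus 0^*=0^*$, $(x^*\oplus y)^*\oplus y=(y^*\oplus x)^*\oplus x$. Put $1=0^*$ and $x\odot y=(x^*\oplus y^* )^*$. The natural order is $x\le y$ iff $x^*\oplus y=1$, with lattice operations $x\vee y=(x\odot y^* )\oplus y$, $x\wedge y=x\odot(x^*\oplus y)$. A $(\odot,\vee)$-derivation on $A$ is a map $d:A\to A$ with $d(x\odot y)=(d(x)\odot y)\vee(x\odot d(y))$ for all $x,y\in A$; $\operatorname{Der}(A)$ is the set of these, ordered by $d\preceq d'$ iff $d(x)\le d'(x)$ for all $x$. $\mathbf{0}_A$ is the constant zero map. *)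

theory Defs
  imports Main
begin

definition mv_algebra :: "('a \<Rightarrow> 'a \<Rightarrow> 'a) \<Rightarrow> ('a \<Rightarrow> 'a) \<Rightarrow> 'a \<Rightarrow> bool" where
  "mv_algebra oplus star zero \<longleftrightarrow>
     (\<forall>x y z. oplus x (oplus y z) = oplus (oplus x y) z) \<and>
     (\<forall>x y. oplus x y = oplus y x) \<and>
     (\<forall>x. oplus x zero = x) \<and>
     (\<forall>x. star (star x) = x) \<and>
     (\<forall>x. oplus x (star zero) = star zero) \<and>
     (\<forall>x y. oplus (star (oplus (star x) y)) y = oplus (star (oplus (star y) x)) x)"

definition mv_one :: "('a \<Rightarrow> 'a) \<Rightarrow> 'a \<Rightarrow> 'a" where
  "mv_one star zero = star zero"

definition mv_odot :: "('a \<Rightarrow> 'a \<Rightarrow> 'a) \<Rightarrow> ('a \<Rightarrow> 'a) \<Rightarrow> 'a \<Rightarrow> 'a \<Rightarrow> 'a" where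
  "mv_odot oplus star x y = star (oplus (star x) (star y))"

definition mv_le :: "('a \<Rightarrow> 'a \<Rightarrow> 'a) \<Rightarrow> ('a \<Rightarrow> 'a) \<Rightarrow> 'a \<Rightarrow> 'a \<Rightarrow> 'a \<Rightarrow> bool" where
  "mv_le oplus star zero x y \<longleftrightarrow> oplus (star x) y = mv_one star zero"

definition mv_join :: "('a \<Rightarrow> 'a \<Rightarrow> 'a) \<Rightarrow> ('a \<Rightarrow> 'a) \<Rightarrow> 'a \<Rightarrow> 'a \<Rightarrow> 'a" where
  "mv_join oplus star x y = oplus (mv_odot oplus star x (star y)) y"

definition mv_meet :: "('a \<Rightarrow> 'a \<Rightarrow> 'a) \<Rightarrow> ('a \<Rightarrow> 'a) \<Rightarrow> 'a \<Rightarrow> 'a \<Rightarrow> 'a" where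
  "mv_meet oplus star x y = mv_odot oplus star x (oplus (star x) y)"

definition mv_is_lub :: "('a \<Rightarrow> 'a \<Rightarrow> 'a) \<Rightarrow> ('a \<Rightarrow> 'a) \<Rightarrow> 'a \<Rightarrow> 'a set \<Rightarrow> 'a \<Rightarrow> bool" where
  "mv_is_lub oplus star zero S s \<longleftrightarrow>
     (\<forall>x\<in>S. mv_le oplus star zero x s) \<and>
     (\<forall>u. (\<forall>x\<in>S. mv_le oplus star zero x u) \<longrightarrow> mv_le oplus star zero s u)"

definition mv_complete :: "('a \<Rightarrow> 'a \<Rightarrow> 'a) \<Rightarrow> ('a \<Rightarrow> 'a) \<Rightarrow> 'a \<Rightarrow> bool" where
  "mv_complete oplus star zero \<longleftrightarrow> (\<forall>S. \<exists>s. mv_is_lub oplus star zero S s)"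

definition mv_Sup :: "('a \<Rightarrow> 'a \<Rightarrow> 'a) \<Rightarrow> ('a \<Rightarrow> 'a) \<Rightarrow> 'a \<Rightarrow> 'a set \<Rightarrow> 'a" where
  "mv_Sup oplus star zero S = (THE s. mv_is_lub oplus star zero S s)"

definition mv_derivation :: "('a \<Rightarrow> 'a \<Rightarrow> 'a) \<Rightarrow> ('a \<Rightarrow> 'a) \<Rightarrow> ('a \<Rightarrow> 'a) \<Rightarrow> bool" where
  "mv_derivation oplus star d \<longleftrightarrow>
     (\<forall>x y. d (mv_odot oplus star x y) =
       mv_join oplus star (mv_odot oplus star (d x) y) (mv_odot oplus star x (d y)))"

definition Der :: "('a \<Rightarrow> 'a \<Rightarrow> 'a) \<Rightarrow> ('a \<Rightarrow> 'a) \<Rightarrow> ('a \<Rightarrow> 'a) set" where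
  "Der oplus star = {d. mv_derivation oplus star d}"

definition der_le :: "('a \<Rightarrow> 'a \<Rightarrow> 'a) \<Rightarrow> ('a \<Rightarrow> 'a) \<Rightarrow> 'a \<Rightarrow> ('a \<Rightarrow> 'a) \<Rightarrow> ('a \<Rightarrow> 'a) \<Rightarrow> bool" where
  "der_le oplus star zero d d' \<longleftrightarrow> (\<forall>x. mv_le oplus star zero (d x) (d' x))"

end

theory Submission
  imports Defs
begin

text \<open>The pointwise supremum D of derivations d_i is again a derivation because both sides of
  D(x \<odot> y) = D x \<odot> y \<or> x \<odot> D y are least upper bounds of the same family
  d_i x \<odot> y \<or> x \<odot> d_i y: the left side by the derivation identity for each d_i, the right side
  since \<odot> preserves arbitrary suprema (it is residuated: x \<odot> s \<le> u iff s \<le> x* \<oplus> u) and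
  suprema commute with binary joins. Der(A) is thus closed under pointwise suprema, hence a
  complete lattice with infima given by suprema of lower bounds; every derivation lies
  between 0 and Id since d(x) \<odot> x* \<le> d(x \<odot> x*) = d(0) = 0, i.e. d(x) \<le> x.\<close>

locale mv =
  fixes oplus :: "'a \<Rightarrow> 'a \<Rightarrow> 'a" (infixl "\<oplus>" 65) and star :: "'a \<Rightarrow> 'a" and zero :: 'a
  assumes mv_algebra: "mv_algebra oplus star zero"
begin

abbreviation odot (infixl "\<odot>" 70) where "x \<odot> y \<equiv> mv_odot oplus star x y"
abbreviation join (infixl "\<squnion>" 65) where "x \<squnion> y \<equiv> mv_join oplus star x y"
abbreviation le (infix "\<preceq>" 50) where "x \<preceq> y \<equiv> mv_le oplus star zero x y"
abbreviation pointwise_le (infix "\<sqsubseteq>" 50) where "f \<sqsubseteq> g \<equiv> der_le oplus star zero f g"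
abbreviation is_lub where "is_lub \<equiv> mv_is_lub oplus star zero"

lemma oplus_assoc: "x \<oplus> (y \<oplus> w) = x \<oplus> y \<oplus> w"
  using mv_algebra unfolding mv_algebra_def by blast

lemma oplus_commute: "x \<oplus> y = y \<oplus> x"
  using mv_algebra unfolding mv_algebra_def by blast

lemma oplus_zero [simp]: "x \<oplus> zero = x"
  using mv_algebra unfolding mv_algebra_def by blast

lemma star_star [simp]: "star (star x) = x"
  using mv_algebra unfolding mv_algebra_def by blast

lemma oplus_one [simp]: "x \<oplus> star zero = star zero"
  using mv_algebra unfolding mv_algebra_def by blast

lemma mv_axiom: "star (star x \<oplus> y) \<oplus> y = star (star y \<oplus> x) \<oplus> x"
  using mv_algebra unfolding mv_algebra_def by blast

lemma oplus_left_commute: "x \<oplus> (y \<oplus> w) = y \<oplus> (x \<oplus> w)"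
  by (metis oplus_assoc oplus_commute)

lemmas oplus_ac = oplus_assoc[symmetric] oplus_commute oplus_left_commute

lemma zero_oplus [simp]: "zero \<oplus> x = x"
  using oplus_commute by simp

lemma one_oplus [simp]: "star zero \<oplus> x = star zero"
  using oplus_commute oplus_one by metis

lemma star_oplus_self [simp]: "star x \<oplus> x = star zero"
  using mv_axiom[of x "star zero"] by simp

lemma star_inject: "star x = star y \<Longrightarrow> x = y"
  by (metis star_star)

lemma le_iff: "x \<preceq> y \<longleftrightarrow> star x \<oplus> y = star zero"
  by (simp add: mv_le_def mv_one_def)

lemma odot_eq: "x \<odot> y = star (star x \<oplus> star y)"
  by (simp add: mv_odot_def)

lemma join_eq: "x \<squnion> y = star (star x \<oplus> y) \<oplus> y"
  by (simp add: mv_join_def mv_odot_def)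

lemma le_iff_exists_oplus: "x \<preceq> y \<longleftrightarrow> (\<exists>w. y = x \<oplus> w)"
proof
  assume "x \<preceq> y"
  then have "y = star (star y \<oplus> x) \<oplus> x"
    using mv_axiom[of x y] by (simp add: le_iff)
  then show "\<exists>w. y = x \<oplus> w"
    using oplus_commute by metis
qed (auto simp: le_iff oplus_assoc)

lemma mv_le_refl: "x \<preceq> x"
  by (simp add: le_iff)

lemma mv_le_trans: "x \<preceq> y \<Longrightarrow> y \<preceq> w \<Longrightarrow> x \<preceq> w"
  unfolding le_iff_exists_oplus by (metis oplus_assoc)

lemma mv_le_antisym: "x \<preceq> y \<Longrightarrow> y \<preceq> x \<Longrightarrow> x = y"
  using mv_axiom[of x y] by (simp add: le_iff)

lemma mv_zero_le: "zero \<preceq> x"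
  by (simp add: le_iff)

lemma le_zero_iff: "x \<preceq> zero \<longleftrightarrow> x = zero"
  using mv_le_antisym mv_zero_le mv_le_refl by blast

lemma oplus_right_mono: "x \<preceq> y \<Longrightarrow> x \<oplus> w \<preceq> y \<oplus> w"
  unfolding le_iff_exists_oplus by (metis oplus_assoc oplus_commute)

lemma star_antimono: "x \<preceq> y \<Longrightarrow> star y \<preceq> star x"
  by (simp add: le_iff oplus_commute)

lemma odot_commute: "x \<odot> y = y \<odot> x"
  by (simp add: odot_eq oplus_commute)

lemma odot_left_mono: "x \<preceq> y \<Longrightarrow> x \<odot> w \<preceq> y \<odot> w"
  unfolding odot_eq by (intro star_antimono oplus_right_mono)

lemma odot_right_mono: "x \<preceq> y \<Longrightarrow> w \<odot> x \<preceq> w \<odot> y"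
  using odot_left_mono odot_commute by metis

lemma odot_zero [simp]: "x \<odot> zero = zero"
  by (simp add: odot_eq)

lemma zero_odot [simp]: "zero \<odot> x = zero"
  by (simp add: odot_eq)

lemma odot_star_self [simp]: "x \<odot> star x = zero"
  by (simp add: odot_eq)

lemma odot_le_iff: "x \<odot> s \<preceq> u \<longleftrightarrow> s \<preceq> star x \<oplus> u"
  by (simp add: le_iff odot_eq oplus_ac)

lemma join_idem [simp]: "x \<squnion> x = x"
  by (simp add: join_eq)

lemma join_commute: "x \<squnion> y = y \<squnion> x"
  unfolding join_eq by (rule mv_axiom)

lemma join_upper2: "y \<preceq> x \<squnion> y"
  unfolding join_eq le_iff_exists_oplus using oplus_commute by blast

lemma join_upper1: "x \<preceq> x \<squnion> y"
  using join_upper2 join_commute by metis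

lemma join_least: "x \<preceq> u \<Longrightarrow> y \<preceq> u \<Longrightarrow> x \<squnion> y \<preceq> u"
proof -
  assume "x \<preceq> u" "y \<preceq> u"
  have "x \<squnion> y \<preceq> star (star u \<oplus> y) \<oplus> y"
    unfolding join_eq using \<open>x \<preceq> u\<close> by (intro oplus_right_mono star_antimono)
  also have "star (star u \<oplus> y) \<oplus> y = u"
    using mv_axiom[of u y] \<open>y \<preceq> u\<close> by (simp add: le_iff)
  finally show ?thesis .
qed

lemma join_mono: "x \<preceq> x' \<Longrightarrow> y \<preceq> y' \<Longrightarrow> x \<squnion> y \<preceq> x' \<squnion> y'"
  by (meson join_least join_upper1 join_upper2 mv_le_trans)

lemma is_lub_unique: "is_lub S s \<Longrightarrow> is_lub S t \<Longrightarrow> s = t"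
  unfolding mv_is_lub_def by (blast intro: mv_le_antisym)

lemma is_lub_odot:
  assumes lub: "is_lub S s"
  shows "is_lub ((\<lambda>t. x \<odot> t) ` S) (x \<odot> s)"
  unfolding mv_is_lub_def
proof (intro conjI allI impI ballI)
  fix v assume "v \<in> (\<lambda>t. x \<odot> t) ` S"
  then show "v \<preceq> x \<odot> s"
    using lub odot_right_mono unfolding mv_is_lub_def by blast
next
  fix u assume "\<forall>v\<in>(\<lambda>t. x \<odot> t) ` S. v \<preceq> u"
  then have "\<forall>t\<in>S. t \<preceq> star x \<oplus> u"
    by (simp add: odot_le_iff)
  then show "x \<odot> s \<preceq> u"
    using lub unfolding mv_is_lub_def odot_le_iff by blast
qed

lemma is_lub_join:
  assumes f: "is_lub (f ` I) a" and g: "is_lub (g ` I) b"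
  shows "is_lub ((\<lambda>i. f i \<squnion> g i) ` I) (a \<squnion> b)"
  unfolding mv_is_lub_def
proof (intro conjI allI impI ballI)
  fix v assume "v \<in> (\<lambda>i. f i \<squnion> g i) ` I"
  then obtain i where "i \<in> I" "v = f i \<squnion> g i"
    by blast
  moreover have "f i \<preceq> a" "g i \<preceq> b" if "i \<in> I" for i
    using f g that unfolding mv_is_lub_def by simp_all
  ultimately show "v \<preceq> a \<squnion> b"
    by (simp add: join_mono)
next
  fix u assume "\<forall>v\<in>(\<lambda>i. f i \<squnion> g i) ` I. v \<preceq> u"
  then have "f i \<preceq> u \<and> g i \<preceq> u" if "i \<in> I" for i
    using that join_upper1 join_upper2 mv_le_trans by fastforce
  then have "a \<preceq> u" "b \<preceq> u"
    using f g unfolding mv_is_lub_def by simp_all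
  then show "a \<squnion> b \<preceq> u"
    by (rule join_least)
qed

lemma is_lub_mv_Sup:
  assumes "mv_complete oplus star zero"
  shows "is_lub S (mv_Sup oplus star zero S)"
proof -
  obtain s where s: "is_lub S s"
    using assms unfolding mv_complete_def by blast
  then have "mv_Sup oplus star zero S = s"
    unfolding mv_Sup_def by (rule the_equality) (rule is_lub_unique[OF _ s])
  with s show ?thesis
    by simp
qed

lemma derivationD: "mv_derivation oplus star d \<Longrightarrow> d (x \<odot> y) = d x \<odot> y \<squnion> x \<odot> d y"
  unfolding mv_derivation_def by blast

lemma derivation_zero: "mv_derivation oplus star d \<Longrightarrow> d zero = zero"
  using derivationD[of d zero zero] by simp

lemma derivation_le:
  assumes "mv_derivation oplus star d"
  shows "d x \<preceq> x"
proof -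
  have "d x \<odot> star x \<squnion> x \<odot> d (star x) = d (x \<odot> star x)"
    by (rule derivationD[OF assms, symmetric])
  also have "\<dots> = zero"
    by (simp add: derivation_zero[OF assms])
  finally have "d x \<odot> star x \<squnion> x \<odot> d (star x) = zero" .
  moreover have "d x \<odot> star x \<preceq> d x \<odot> star x \<squnion> x \<odot> d (star x)"
    by (rule join_upper1)
  ultimately have "d x \<odot> star x = zero"
    by (simp add: le_zero_iff)
  then have "star (star (d x) \<oplus> x) = star (star zero)"
    by (simp add: odot_eq)
  then have "star (d x) \<oplus> x = star zero"
    by (rule star_inject)
  then show ?thesis
    by (simp add: le_iff)
qed

lemma derivation_const_zero: "mv_derivation oplus star (\<lambda>x. zero)"
  by (simp add: mv_derivation_def)

lemma derivation_id: "mv_derivation oplus star id"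
  by (simp add: mv_derivation_def)

lemma derivation_Sup:
  assumes complete: "mv_complete oplus star zero"
    and derivs: "\<And>i. i \<in> \<Omega> \<Longrightarrow> mv_derivation oplus star (d i)"
  shows "mv_derivation oplus star (\<lambda>x. mv_Sup oplus star zero ((\<lambda>i. d i x) ` \<Omega>))"
    (is "mv_derivation oplus star ?D")
proof -
  have lub: "is_lub ((\<lambda>i. d i x) ` \<Omega>) (?D x)" for x
    using is_lub_mv_Sup[OF complete] .
  have "?D (x \<odot> y) = ?D x \<odot> y \<squnion> x \<odot> ?D y" for x y
  proof (rule is_lub_unique)
    have "(\<lambda>i. d i (x \<odot> y)) ` \<Omega> = (\<lambda>i. d i x \<odot> y \<squnion> x \<odot> d i y) ` \<Omega>"
      using derivationD[OF derivs] by simp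
    with lub[of "x \<odot> y"]
    show "is_lub ((\<lambda>i. d i x \<odot> y \<squnion> x \<odot> d i y) ` \<Omega>) (?D (x \<odot> y))"
      by (simp only:)
    have "is_lub ((\<lambda>i. y \<odot> d i x) ` \<Omega>) (y \<odot> ?D x)"
      using is_lub_odot[OF lub] by (simp add: image_image)
    then have "is_lub ((\<lambda>i. d i x \<odot> y) ` \<Omega>) (?D x \<odot> y)"
      unfolding odot_commute[of y] .
    moreover have "is_lub ((\<lambda>i. x \<odot> d i y) ` \<Omega>) (x \<odot> ?D y)"
      using is_lub_odot[OF lub] by (simp add: image_image)
    ultimately show "is_lub ((\<lambda>i. d i x \<odot> y \<squnion> x \<odot> d i y) ` \<Omega>) (?D x \<odot> y \<squnion> x \<odot> ?D y)"
      by (rule is_lub_join)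
  qed
  then show ?thesis
    unfolding mv_derivation_def by blast
qed

lemma der_le_Sup_upper:
  assumes "mv_complete oplus star zero" and "f \<in> D"
  shows "f \<sqsubseteq> (\<lambda>x. mv_Sup oplus star zero {g x | g. g \<in> D})"
  unfolding der_le_def
proof
  fix x
  have "f x \<in> {g x | g. g \<in> D}"
    using assms(2) by blast
  then show "f x \<preceq> mv_Sup oplus star zero {g x | g. g \<in> D}"
    using is_lub_mv_Sup[OF assms(1)] unfolding mv_is_lub_def by simp
qed

lemma der_le_Sup_least:
  assumes "mv_complete oplus star zero" and "\<And>f. f \<in> D \<Longrightarrow> f \<sqsubseteq> u"
  shows "(\<lambda>x. mv_Sup oplus star zero {g x | g. g \<in> D}) \<sqsubseteq> u"
  unfolding der_le_def
proof
  fix x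
  have "\<forall>v\<in>{g x | g. g \<in> D}. v \<preceq> u x"
    using assms(2) unfolding der_le_def by blast
  then show "mv_Sup oplus star zero {g x | g. g \<in> D} \<preceq> u x"
    using is_lub_mv_Sup[OF assms(1)] unfolding mv_is_lub_def by simp
qed

lemma Der_closed_Sup:
  assumes "mv_complete oplus star zero" and "D \<subseteq> Der oplus star"
  shows "(\<lambda>x. mv_Sup oplus star zero {g x | g. g \<in> D}) \<in> Der oplus star"
proof -
  have "mv_derivation oplus star (\<lambda>x. mv_Sup oplus star zero ((\<lambda>g. g x) ` D))"
    using assms(2) by (intro derivation_Sup[OF assms(1)]) (auto simp: Der_def)
  then show ?thesis
    by (simp add: Der_def Setcompr_eq_image)
qed

lemma Der_has_Sup:
  assumes "mv_complete oplus star zero" and "D \<subseteq> Der oplus star"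
  shows "\<exists>s\<in>Der oplus star. (\<forall>f\<in>D. f \<sqsubseteq> s) \<and> (\<forall>u\<in>Der oplus star. (\<forall>f\<in>D. f \<sqsubseteq> u) \<longrightarrow> s \<sqsubseteq> u)"
proof -
  let ?s = "\<lambda>x. mv_Sup oplus star zero {g x | g. g \<in> D}"
  have "\<forall>f\<in>D. f \<sqsubseteq> ?s"
    by (intro ballI der_le_Sup_upper[OF assms(1)])
  moreover have "\<forall>u\<in>Der oplus star. (\<forall>f\<in>D. f \<sqsubseteq> u) \<longrightarrow> ?s \<sqsubseteq> u"
    by (intro ballI impI der_le_Sup_least[OF assms(1)]) simp
  ultimately show ?thesis
    using Der_closed_Sup[OF assms] by (intro bexI conjI) assumption+
qed

lemma Der_has_Inf:
  assumes "mv_complete oplus star zero" and "D \<subseteq> Der oplus star"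
  shows "\<exists>s\<in>Der oplus star. (\<forall>f\<in>D. s \<sqsubseteq> f) \<and> (\<forall>u\<in>Der oplus star. (\<forall>f\<in>D. u \<sqsubseteq> f) \<longrightarrow> u \<sqsubseteq> s)"
proof -
  let ?L = "{u \<in> Der oplus star. \<forall>f\<in>D. u \<sqsubseteq> f}"
  obtain s where s: "s \<in> Der oplus star"
    and upper: "\<And>u. u \<in> ?L \<Longrightarrow> u \<sqsubseteq> s"
    and least: "\<And>v. v \<in> Der oplus star \<Longrightarrow> \<forall>u\<in>?L. u \<sqsubseteq> v \<Longrightarrow> s \<sqsubseteq> v"
    using Der_has_Sup[OF assms(1), of ?L] by blast
  show ?thesis
  proof (intro bexI conjI ballI impI)
    show "s \<in> Der oplus star"
      by (rule s)
  next
    fix f assume "f \<in> D"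
    then show "s \<sqsubseteq> f"
      using assms(2) by (intro least) auto
  next
    fix u assume "u \<in> Der oplus star" "\<forall>f\<in>D. u \<sqsubseteq> f"
    then show "u \<sqsubseteq> s"
      by (intro upper) simp
  qed
qed

lemma der_le_refl: "f \<sqsubseteq> f"
  by (simp add: der_le_def mv_le_refl)

lemma der_le_antisym: "f \<sqsubseteq> g \<Longrightarrow> g \<sqsubseteq> f \<Longrightarrow> f = g"
  unfolding der_le_def by (blast intro: mv_le_antisym)

lemma der_le_trans: "f \<sqsubseteq> g \<Longrightarrow> g \<sqsubseteq> h \<Longrightarrow> f \<sqsubseteq> h"
  unfolding der_le_def by (blast intro: mv_le_trans)

lemma Der_bounds: "f \<in> Der oplus star \<Longrightarrow> (\<lambda>x. zero) \<sqsubseteq> f \<and> f \<sqsubseteq> id"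
  by (simp add: Der_def der_le_def mv_zero_le derivation_le)

end

theorem theorem5p9:
  fixes oplus :: "'a \<Rightarrow> 'a \<Rightarrow> 'a" and star :: "'a \<Rightarrow> 'a" and zero :: 'a
    and \<Omega> :: "'i set" and d :: "'i \<Rightarrow> 'a \<Rightarrow> 'a"
  assumes "mv_algebra oplus star zero"
    and "mv_complete oplus star zero"
    and "\<forall>i\<in>\<Omega>. d i \<in> Der oplus star"
  shows "(\<lambda>x. mv_Sup oplus star zero {d i x | i. i \<in> \<Omega>}) \<in> Der oplus star
    \<and> ((\<forall>f\<in>Der oplus star. der_le oplus star zero f f)
       \<and> (\<forall>f\<in>Der oplus star. \<forall>g\<in>Der oplus star.
            der_le oplus star zero f g \<and> der_le oplus star zero g f \<longrightarrow> f = g)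
       \<and> (\<forall>f\<in>Der oplus star. \<forall>g\<in>Der oplus star. \<forall>h\<in>Der oplus star.
            der_le oplus star zero f g \<and> der_le oplus star zero g h \<longrightarrow> der_le oplus star zero f h)
       \<and> (\<forall>D \<subseteq> Der oplus star. \<exists>s\<in>Der oplus star.
            (\<forall>f\<in>D. der_le oplus star zero f s) \<and>
            (\<forall>u\<in>Der oplus star. (\<forall>f\<in>D. der_le oplus star zero f u) \<longrightarrow> der_le oplus star zero s u))
       \<and> (\<forall>D \<subseteq> Der oplus star. \<exists>s\<in>Der oplus star.
            (\<forall>f\<in>D. der_le oplus star zero s f) \<and>
            (\<forall>u\<in>Der oplus star. (\<forall>f\<in>D. der_le oplus star zero u f) \<longrightarrow> der_le oplus star zero u s))
       \<and> (\<lambda>x. zero) \<in> Der oplus star \<and> id \<in> Der oplus star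
       \<and> (\<forall>f\<in>Der oplus star. der_le oplus star zero (\<lambda>x. zero) f \<and> der_le oplus star zero f id))"
proof -
  interpret mv oplus star zero
    by (rule mv.intro) (rule assms(1))
  have "mv_derivation oplus star (\<lambda>x. mv_Sup oplus star zero ((\<lambda>i. d i x) ` \<Omega>))"
    using assms(3) by (intro derivation_Sup[OF assms(2)]) (simp add: Der_def)
  then have "(\<lambda>x. mv_Sup oplus star zero {d i x | i. i \<in> \<Omega>}) \<in> Der oplus star"
    by (simp add: Der_def Setcompr_eq_image)
  moreover have "(\<lambda>x. zero) \<in> Der oplus star" "id \<in> Der oplus star"
    using derivation_const_zero derivation_id by (simp_all add: Der_def)
  ultimately show ?thesis
    using Der_has_Sup[OF assms(2)] Der_has_Inf[OF assms(2)] Der_bounds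
    by (intro conjI ballI allI impI; (elim conjE)?)
      (simp_all add: der_le_refl der_le_antisym der_le_trans)
qed

end
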